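(* Let $T,B_1,B_3>0$, $\varepsilon,\varepsilon_1,\varepsilon_2>0$. The functions $K_1,K_2:Y\times\mathbb{R}\times X_{B_1}\to\mathbb{R}$, $$K_1(\tilde\theta,s,\gamma)=\int_{(0,T)^2}\chi_{\{0<t_2-t_1<\varepsilon_1\}}\big|(A_\varepsilon\tilde\theta)_{t_1}(\gamma_{t_1})-(A_\varepsilon\tilde\theta)_{t_2}(\gamma_{t_2})\big|\chi_{\{(A_\varepsilon\tilde\theta)_{t_1}(\gamma_{t_1})>\Theta(s,\gamma_{t_1},t_1)+\varepsilon_2\}}\,dt_1dt_2,$$ $$K_2(\tilde\theta,s,\gamma)=\int_{(0,T)^2}\chi_{\{0<t_2-t_1<\varepsilon_1\}}(\gamma_{t_2}-\gamma_{t_1})^+\chi_{\{(A_\varepsilon\tilde\theta)_{t_1}(\gamma_{t_1})>\Theta(s,\gamma_{t_1},t_1)+\varepsilon_2\}}\,dt_1dt_2,$$ are lower semi-continuous.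
   Context: $Q^{sat}:\mathbb{R}^3\to\mathbb{R}$ is smooth with $\partial_\theta Q^{sat}>0$, $\partial_zQ^{sat}<0$; $\Theta(w,z,t)$ is the solution $\theta$ of $\theta+Q^{sat}(\theta,z,t)=w$ (assumed well defined), smooth. $X_{B_1}$: left-continuous $\gamma:(0,T)\to[0,1]$ with total variation $\le B_1$, metric $\|\cdot\|_{L^2(0,T)}$; $\gamma_t=\gamma(t)$. $Y_{B_3}$: nondecreasing $\theta:[0,1]\to\mathbb{R}$, right-continuous on $[0,1)$, $|\theta|\le B_3$, metric $L^2(0,1)$. $Y=C([0,T);Y_{B_3})$ with sup-in-time metric. $(A_\varepsilon\tilde\theta)_t(z)=\varepsilon^{-1}\int_z^{z+\varepsilon}\tilde\theta_t(w)\,dw$, with $\tilde\theta_t(w)=B_3$ for $w\ge1$. *)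

theory Defs
  imports "HOL-Analysis.Analysis"
begin

fun Ck :: "nat \<Rightarrow> ('a::euclidean_space \<Rightarrow> real) \<Rightarrow> bool" where
  "Ck 0 f \<longleftrightarrow> continuous_on UNIV f"
| "Ck (Suc k) f \<longleftrightarrow> (\<exists>f'. (\<forall>x. (f has_derivative f' x) (at x)) \<and>
                       (\<forall>v. Ck k (\<lambda>x. f' x v)) \<and> continuous_on UNIV f)"

definition smooth :: "('a::euclidean_space \<Rightarrow> real) \<Rightarrow> bool" where
  "smooth f \<longleftrightarrow> (\<forall>k. Ck k f)"

definition total_variation_le :: "(real \<Rightarrow> real) \<Rightarrow> real set \<Rightarrow> real \<Rightarrow> bool" where
  "total_variation_le g S B \<longleftrightarrow>
     (\<forall>(n::nat) (p::nat \<Rightarrow> real). (\<forall>i\<le>n. p i \<in> S) \<and> (\<forall>i<n. p i < p (Suc i)) \<longrightarrow>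
        (\<Sum>i<n. \<bar>g (p (Suc i)) - g (p i)\<bar>) \<le> B)"

definition L2dist :: "real \<Rightarrow> real \<Rightarrow> (real \<Rightarrow> real) \<Rightarrow> (real \<Rightarrow> real) \<Rightarrow> real" where
  "L2dist a b f g = sqrt (LINT x:{a<..<b}|lborel. (f x - g x)^2)"

definition in_X :: "real \<Rightarrow> real \<Rightarrow> (real \<Rightarrow> real) \<Rightarrow> bool" where
  "in_X T B1 \<gamma> \<longleftrightarrow> (\<forall>t\<in>{0<..<T}. \<gamma> t \<in> {0..1} \<and> continuous (at_left t) \<gamma>)
                    \<and> total_variation_le \<gamma> {0<..<T} B1"

definition in_YB :: "real \<Rightarrow> (real \<Rightarrow> real) \<Rightarrow> bool" where
  "in_YB B3 \<theta> \<longleftrightarrow> mono_on {0..1} \<theta> \<and> (\<forall>w\<in>{0..<1}. continuous (at_right w) \<theta>)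
                  \<and> (\<forall>w\<in>{0..1}. \<bar>\<theta> w\<bar> \<le> B3)"

definition in_Y :: "real \<Rightarrow> real \<Rightarrow> (real \<Rightarrow> real \<Rightarrow> real) \<Rightarrow> bool" where
  "in_Y T B3 \<Theta>t \<longleftrightarrow> (\<forall>t\<in>{0..<T}. in_YB B3 (\<Theta>t t)) \<and>
     (\<forall>t\<in>{0..<T}. ((\<lambda>t'. L2dist 0 1 (\<Theta>t t') (\<Theta>t t)) \<longlongrightarrow> 0) (at t within {0..<T}))"

definition Ydist :: "real \<Rightarrow> (real \<Rightarrow> real \<Rightarrow> real) \<Rightarrow> (real \<Rightarrow> real \<Rightarrow> real) \<Rightarrow> real" where
  "Ydist T f g = (SUP t\<in>{0..<T}. L2dist 0 1 (f t) (g t))"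

definition A_eps :: "real \<Rightarrow> real \<Rightarrow> (real \<Rightarrow> real \<Rightarrow> real) \<Rightarrow> real \<Rightarrow> real \<Rightarrow> real" where
  "A_eps B3 \<epsilon> \<Theta>t t z =
     (1 / \<epsilon>) * (LINT w:{z..z+\<epsilon>}|lborel. (if w \<ge> 1 then B3 else \<Theta>t t w))"

definition K1 :: "real \<Rightarrow> real \<Rightarrow> real \<Rightarrow> real \<Rightarrow> real \<Rightarrow> (real \<times> real \<times> real \<Rightarrow> real)
                  \<Rightarrow> (real \<Rightarrow> real \<Rightarrow> real) \<Rightarrow> real \<Rightarrow> (real \<Rightarrow> real) \<Rightarrow> real" where
  "K1 T B3 \<epsilon> \<epsilon>1 \<epsilon>2 Th \<Theta>t s \<gamma> =
     (LINT p:({0<..<T} \<times> {0<..<T})|lborel.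
        indicator {p. 0 < snd p - fst p \<and> snd p - fst p < \<epsilon>1} p *
        \<bar>A_eps B3 \<epsilon> \<Theta>t (fst p) (\<gamma> (fst p)) - A_eps B3 \<epsilon> \<Theta>t (snd p) (\<gamma> (snd p))\<bar> *
        indicator {p. A_eps B3 \<epsilon> \<Theta>t (fst p) (\<gamma> (fst p)) > Th (s, \<gamma> (fst p), fst p) + \<epsilon>2} p)"

definition K2 :: "real \<Rightarrow> real \<Rightarrow> real \<Rightarrow> real \<Rightarrow> real \<Rightarrow> (real \<times> real \<times> real \<Rightarrow> real)
                  \<Rightarrow> (real \<Rightarrow> real \<Rightarrow> real) \<Rightarrow> real \<Rightarrow> (real \<Rightarrow> real) \<Rightarrow> real" where
  "K2 T B3 \<epsilon> \<epsilon>1 \<epsilon>2 Th \<Theta>t s \<gamma> =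
     (LINT p:({0<..<T} \<times> {0<..<T})|lborel.
        indicator {p. 0 < snd p - fst p \<and> snd p - fst p < \<epsilon>1} p *
        max (\<gamma> (snd p) - \<gamma> (fst p)) 0 *
        indicator {p. A_eps B3 \<epsilon> \<Theta>t (fst p) (\<gamma> (fst p)) > Th (s, \<gamma> (fst p), fst p) + \<epsilon>2} p)"

definition lsc_YRX :: "real \<Rightarrow> real \<Rightarrow> real \<Rightarrow>
     ((real \<Rightarrow> real \<Rightarrow> real) \<Rightarrow> real \<Rightarrow> (real \<Rightarrow> real) \<Rightarrow> real) \<Rightarrow> bool" where
  "lsc_YRX T B1 B3 K \<longleftrightarrow>
     (\<forall>\<Theta>t s \<gamma> \<Theta>n sn \<gamma>n.
        in_Y T B3 \<Theta>t \<and> in_X T B1 \<gamma> \<and> (\<forall>n. in_Y T B3 (\<Theta>n n) \<and> in_X T B1 (\<gamma>n n)) \<and>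
        (\<lambda>n. Ydist T (\<Theta>n n) \<Theta>t) \<longlonglongrightarrow> 0 \<and> sn \<longlonglongrightarrow> s \<and>
        (\<lambda>n. L2dist 0 T (\<gamma>n n) \<gamma>) \<longlonglongrightarrow> 0
      \<longrightarrow> ereal (K \<Theta>t s \<gamma>) \<le> liminf (\<lambda>n. ereal (K (\<Theta>n n) (sn n) (\<gamma>n n))))"

end

theory Submission
  imports Defs
begin

text \<open>
  The window average \<open>A\<^sub>\<epsilon>\<close> is jointly continuous in \<open>(t, z)\<close> and \<open>1/\<epsilon>\<close>-Lipschitz in the
  profile with respect to the \<open>L\<^sup>2(0,1)\<close> distance, by Cauchy-Schwarz. Along a sequence converging in
  \<open>Y \<times> \<real> \<times> X\<^sub>B\<^sub>1\<close>, any subsequence has a further subsequence on which \<open>\<gamma>\<^sub>n \<rightarrow> \<gamma>\<close> almost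
  everywhere; there the weights of \<open>K\<^sub>1\<close> and \<open>K\<^sub>2\<close> converge, and the indicator of the strict
  superlevel set \<open>{A\<^sub>\<epsilon> > \<Theta> + \<epsilon>\<^sub>2}\<close> is lower semicontinuous. Fatou's lemma applied along a
  subsequence realising the \<open>liminf\<close> gives the claim. Left continuity of \<open>\<gamma>\<close> is what makes the
  integrands measurable.
\<close>

lemma set_integrable_bounded:
  fixes f :: "'a \<Rightarrow> real"
  assumes "A \<in> sets M" "emeasure M A < \<infinity>" "set_borel_measurable M A f"
    and "\<And>x. x \<in> A \<Longrightarrow> \<bar>f x\<bar> \<le> B"
  shows "set_integrable M A f"
  unfolding set_integrable_def
  by (rule integrableI_bounded_set[where A=A and B=B])
     (use assms in \<open>auto simp: set_borel_measurable_def\<close>)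

lemma set_integral_abs_le_sqrt:
  fixes f :: "'a \<Rightarrow> real"
  assumes A: "A \<in> sets M" "emeasure M A < \<infinity>"
    and f: "set_integrable M A f" and f2: "set_integrable M A (\<lambda>x. (f x)\<^sup>2)"
  shows "(LINT x:A|M. \<bar>f x\<bar>) \<le> sqrt (measure M A * (LINT x:A|M. (f x)\<^sup>2))"
proof -
  let ?I1 = "LINT x:A|M. \<bar>f x\<bar>" and ?I2 = "LINT x:A|M. (f x)\<^sup>2"
  have [measurable]: "(\<lambda>x. indicator A x * f x) \<in> borel_measurable M"
    using f by (simp add: set_integrable_def)
  have ennreal_set_integral: "ennreal (LINT x:A|M. g x) = (\<integral>\<^sup>+x. ennreal (indicator A x * g x) \<partial>M)"
    if "set_integrable M A g" "\<And>x. 0 \<le> g x" for g :: "'a \<Rightarrow> real"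
    using that unfolding set_lebesgue_integral_def set_integrable_def
    by (subst nn_integral_eq_integral) auto
  define F where "F x = ennreal (indicator A x * \<bar>f x\<bar>)" for x
  have F_indicator: "F x * indicator A x = F x" for x
    by (simp add: F_def indicator_def)
  have "(ennreal ?I1)\<^sup>2 = (\<integral>\<^sup>+x. F x * indicator A x \<partial>M)\<^sup>2"
    by (simp only: F_indicator) (simp add: F_def ennreal_set_integral[OF set_integrable_abs[OF f]])
  also have "\<dots> \<le> (\<integral>\<^sup>+x. (F x)\<^sup>2 \<partial>M) * (\<integral>\<^sup>+x. (indicator A x)\<^sup>2 \<partial>M)"
  proof (rule Cauchy_Schwarz_nn_integral)
    have "(\<lambda>x. \<bar>indicator A x * f x\<bar>) \<in> borel_measurable M" by measurable
    then show "F \<in> borel_measurable M"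
      unfolding F_def[abs_def] by (simp add: abs_mult)
  qed (use A in measurable)
  also have "(\<integral>\<^sup>+x. (F x)\<^sup>2 \<partial>M) = ennreal ?I2"
  proof -
    have "(F x)\<^sup>2 = ennreal (indicator A x * (f x)\<^sup>2)" for x
      by (cases "x \<in> A") (simp_all add: F_def ennreal_power)
    then show ?thesis by (simp add: ennreal_set_integral[OF f2])
  qed
  also have "(\<integral>\<^sup>+x. (indicator A x)\<^sup>2 \<partial>M) = emeasure M A"
    using A by (simp add: power2_eq_square flip: indicator_inter_arith)
  also have "ennreal ?I2 * emeasure M A = ennreal (?I2 * measure M A)"
    using A by (simp add: emeasure_eq_ennreal_measure ennreal_mult'' less_top)
  finally have "?I1\<^sup>2 \<le> ?I2 * measure M A"
    by (simp add: ennreal_power set_lebesgue_integral_def)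
  then show ?thesis
    by (intro real_le_rsqrt) (simp add: mult.commute)
qed

section \<open>Window averages of profiles\<close>

text \<open>Beyond \<open>1\<close> the profile is extended by \<open>B3\<close> as in \<open>A_eps\<close>; below \<open>0\<close> it is
  extended by \<open>\<theta> 0\<close>, which makes the extension monotone, hence Borel, on all of \<open>\<real>\<close>.\<close>

definition profile_ext :: "real \<Rightarrow> (real \<Rightarrow> real) \<Rightarrow> real \<Rightarrow> real" where
  "profile_ext B3 \<theta> w = (if 1 \<le> w then B3 else \<theta> (max w 0))"

definition window_avg :: "real \<Rightarrow> real \<Rightarrow> (real \<Rightarrow> real) \<Rightarrow> real \<Rightarrow> real" where
  "window_avg B3 \<epsilon> \<theta> z = (1 / \<epsilon>) * (LINT w:{z..z+\<epsilon>}|lborel. profile_ext B3 \<theta> w)"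

lemma profile_ext_eq [simp]: "w \<in> {0..<1} \<Longrightarrow> profile_ext B3 \<theta> w = \<theta> w"
  by (simp add: profile_ext_def)

lemma A_eps_eq_window_avg: "0 \<le> z \<Longrightarrow> A_eps B3 \<epsilon> \<Theta>t t z = window_avg B3 \<epsilon> (\<Theta>t t) z"
  unfolding A_eps_def window_avg_def
  by (intro arg_cong[where f="(*) _"] set_lebesgue_integral_cong) (auto simp: profile_ext_def)

lemma in_YB_nonneg: "in_YB B3 \<theta> \<Longrightarrow> 0 \<le> B3"
  unfolding in_YB_def by (meson abs_ge_zero atLeastAtMost_iff order.trans zero_le_one order_refl)

lemma abs_profile_ext_le: "in_YB B3 \<theta> \<Longrightarrow> \<bar>profile_ext B3 \<theta> w\<bar> \<le> B3"
  using in_YB_nonneg[of B3 \<theta>] unfolding in_YB_def profile_ext_def by auto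

lemma mono_profile_ext: "in_YB B3 \<theta> \<Longrightarrow> mono (profile_ext B3 \<theta>)"
  unfolding in_YB_def profile_ext_def mono_def
  by (auto intro!: mono_onD[of "{0..1}" \<theta>] simp: abs_le_iff)

lemma borel_measurable_profile_ext: "in_YB B3 \<theta> \<Longrightarrow> profile_ext B3 \<theta> \<in> borel_measurable borel"
  by (rule borel_measurable_mono[OF mono_profile_ext])

lemma set_integrable_profile_ext:
  assumes "in_YB B3 \<theta>" "A \<in> sets lborel" "bounded A"
  shows "set_integrable lborel A (profile_ext B3 \<theta>)"
  using assms borel_measurable_profile_ext[OF assms(1)] abs_profile_ext_le[OF assms(1)]
  by (intro set_integrable_bounded emeasure_bounded_finite) (auto simp: set_borel_measurable_def)

lemma set_integrable_profile_diff:
  assumes "in_YB B3 \<theta>" "in_YB B3 \<theta>'" "A \<in> sets lborel" "bounded A"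
  shows "set_integrable lborel A (\<lambda>w. profile_ext B3 \<theta> w - profile_ext B3 \<theta>' w)"
  using set_integrable_profile_ext[OF assms(1,3,4)] set_integrable_profile_ext[OF assms(2,3,4)]
  by (rule set_integral_diff)

lemma L2dist_in_YB_bounds:
  assumes "in_YB B3 \<theta>" "in_YB B3 \<theta>'"
  shows "(LINT w:{0<..<1}|lborel. \<bar>\<theta> w - \<theta>' w\<bar>) \<le> L2dist 0 1 \<theta> \<theta>'"
    and "L2dist 0 1 \<theta> \<theta>' \<le> 2 * B3"
proof -
  let ?d = "\<lambda>w. profile_ext B3 \<theta> w - profile_ext B3 \<theta>' w"
  have d_le: "\<bar>?d w\<bar> \<le> 2 * B3" for w
    using abs_profile_ext_le[OF assms(1), of w] abs_profile_ext_le[OF assms(2), of w] by linarith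
  have d_meas: "?d \<in> borel_measurable borel"
    using borel_measurable_profile_ext[OF assms(1)] borel_measurable_profile_ext[OF assms(2)]
    by (rule borel_measurable_diff)
  have d2_le: "(?d w)\<^sup>2 \<le> (2 * B3)\<^sup>2" for w
    using power_mono[OF d_le[of w], of 2] by simp
  have d: "set_integrable lborel {0<..<1} ?d"
    by (rule set_integrable_profile_diff[OF assms]) auto
  have d2: "set_integrable lborel {0<..<1} (\<lambda>w. (?d w)\<^sup>2)"
  proof (rule set_integrable_bounded[where B="(2 * B3)\<^sup>2"])
    show "\<bar>(?d w)\<^sup>2\<bar> \<le> (2 * B3)\<^sup>2" for w
      using d2_le[of w] by simp
  qed (use d_meas in \<open>auto simp: set_borel_measurable_def\<close>)
  have on_01: "(LINT w:{0<..<1}|lborel. g (\<theta> w - \<theta>' w)) = (LINT w:{0<..<1}|lborel. g (?d w))"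
    for g :: "real \<Rightarrow> real"
    by (rule set_lebesgue_integral_cong) auto
  show "(LINT w:{0<..<1}|lborel. \<bar>\<theta> w - \<theta>' w\<bar>) \<le> L2dist 0 1 \<theta> \<theta>'"
    using set_integral_abs_le_sqrt[OF _ _ d d2]
    unfolding L2dist_def on_01[of abs] on_01[of "\<lambda>x. x\<^sup>2"] by simp
  have "(LINT w:{0<..<1}|lborel. (?d w)\<^sup>2) \<le> (LINT w::real:{0<..<1}|lborel. (2 * B3)\<^sup>2)"
  proof (rule set_integral_mono)
    show "set_integrable lborel {0<..<1} (\<lambda>w. (?d w)\<^sup>2)" by (fact d2)
    show "set_integrable lborel {0<..<1} (\<lambda>w::real. (2 * B3)\<^sup>2)"
      by (simp add: set_integrable_def)
  qed (rule d2_le)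
  also have "\<dots> = (2 * B3)\<^sup>2"
    by (simp add: set_integral_const)
  finally show "L2dist 0 1 \<theta> \<theta>' \<le> 2 * B3"
    using in_YB_nonneg[OF assms(1)]
    unfolding L2dist_def on_01[of "\<lambda>x. x\<^sup>2"] by (simp add: real_le_lsqrt)
qed

lemma abs_window_avg_le:
  assumes "in_YB B3 \<theta>" "\<epsilon> > 0"
  shows "\<bar>window_avg B3 \<epsilon> \<theta> z\<bar> \<le> B3"
proof -
  have int: "set_integrable lborel {z..z+\<epsilon>} (profile_ext B3 \<theta>)"
    by (rule set_integrable_profile_ext[OF assms(1)]) auto
  have "\<bar>LINT w:{z..z+\<epsilon>}|lborel. profile_ext B3 \<theta> w\<bar> \<le> (LINT w:{z..z+\<epsilon>}|lborel. \<bar>profile_ext B3 \<theta> w\<bar>)"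
    using set_integral_norm_bound[OF int] by simp
  also have "\<dots> \<le> (LINT w:{z..z+\<epsilon>}|lborel. B3)"
  proof (rule set_integral_mono[OF set_integrable_abs[OF int]])
    show "set_integrable lborel {z..z+\<epsilon>} (\<lambda>_. B3)"
      by (intro set_integrable_bounded[where B="\<bar>B3\<bar>"] emeasure_bounded_finite)
        (auto simp: set_borel_measurable_def)
  qed (use abs_profile_ext_le[OF assms(1)] in auto)
  also have "\<dots> = \<epsilon> * B3"
    using assms(2) by (simp add: set_integral_const)
  finally show ?thesis
    using assms(2) unfolding window_avg_def by (simp add: abs_mult field_simps)
qed

lemma abs_window_avg_diff_le:
  assumes \<theta>: "in_YB B3 \<theta>" "in_YB B3 \<theta>'" and "\<epsilon> > 0" "0 \<le> z"
  shows "\<bar>window_avg B3 \<epsilon> \<theta> z - window_avg B3 \<epsilon> \<theta>' z\<bar> \<le> L2dist 0 1 \<theta> \<theta>' / \<epsilon>"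
proof -
  let ?d = "\<lambda>w. profile_ext B3 \<theta> w - profile_ext B3 \<theta>' w"
  have int: "set_integrable lborel A ?d" if "A \<in> sets lborel" "bounded A" for A
    using set_integrable_profile_diff[OF \<theta> that] .
  have diff_eq: "window_avg B3 \<epsilon> \<theta> z - window_avg B3 \<epsilon> \<theta>' z = (LINT w:{z..z+\<epsilon>}|lborel. ?d w) / \<epsilon>"
    using set_integrable_profile_ext[OF \<theta>(1)] set_integrable_profile_ext[OF \<theta>(2)]
    unfolding window_avg_def by (simp add: set_integral_diff diff_divide_distrib)
  have "\<bar>LINT w:{z..z+\<epsilon>}|lborel. ?d w\<bar> \<le> (LINT w:{z..z+\<epsilon>}|lborel. \<bar>?d w\<bar>)"
    using set_integral_norm_bound[OF int] by simp
  also have "\<dots> \<le> (LINT w:{0<..<1}|lborel. \<bar>?d w\<bar>)"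
    \<comment> \<open>for \<open>z \<ge> 0\<close> the difference vanishes on the window outside \<open>[0,1)\<close>\<close>
    unfolding set_lebesgue_integral_def
  proof (rule integral_mono_AE)
    have "integrable lborel (\<lambda>w. indicator A w *\<^sub>R \<bar>?d w\<bar>)"
      if "A \<in> sets lborel" "bounded A" for A
      using set_integrable_abs[OF int[OF that]] unfolding set_integrable_def .
    then show "integrable lborel (\<lambda>w. indicator {z..z+\<epsilon>} w *\<^sub>R \<bar>?d w\<bar>)"
      and "integrable lborel (\<lambda>w. indicator {0<..<1} w *\<^sub>R \<bar>?d w\<bar>)"
      by auto
    show "AE w in lborel. indicator {z..z+\<epsilon>} w *\<^sub>R \<bar>?d w\<bar> \<le> indicator {0<..<1} w *\<^sub>R \<bar>?d w\<bar>"
      using AE_lborel_singleton[of "0::real"]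
      by eventually_elim (use assms(4) in \<open>auto simp: indicator_def profile_ext_def\<close>)
  qed
  also have "\<dots> = (LINT w:{0<..<1}|lborel. \<bar>\<theta> w - \<theta>' w\<bar>)"
    by (rule set_lebesgue_integral_cong) auto
  also have "\<dots> \<le> L2dist 0 1 \<theta> \<theta>'"
    by (rule L2dist_in_YB_bounds(1)[OF \<theta>])
  finally show ?thesis
    unfolding diff_eq using assms(3) by (simp add: divide_right_mono)
qed

lemma continuous_on_window_avg:
  assumes "in_YB B3 \<theta>" "\<epsilon> > 0"
  shows "continuous_on {0..1} (window_avg B3 \<epsilon> \<theta>)"
proof -
  let ?f = "profile_ext B3 \<theta>"
  have int: "set_integrable lborel {a..b} ?f" for a b
    by (rule set_integrable_profile_ext[OF assms(1)]) auto
  define G where "G x = integral {0..x} ?f" for x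
  have G: "continuous_on {0..1+\<epsilon>} G"
    unfolding G_def
    by (rule indefinite_integral_continuous_1[OF set_borel_integral_eq_integral(1)[OF int]])
  have "continuous_on {0..1} (\<lambda>z. (1 / \<epsilon>) * (G (z + \<epsilon>) - G z))"
    using assms(2)
    by (intro continuous_intros continuous_on_compose2[OF G] continuous_on_subset[OF G]) auto
  moreover have "(1 / \<epsilon>) * (G (z + \<epsilon>) - G z) = window_avg B3 \<epsilon> \<theta> z" if "z \<in> {0..1}" for z
  proof -
    have "integral {0..z} ?f + integral {z..z+\<epsilon>} ?f = integral {0..z+\<epsilon>} ?f"
      using that assms(2)
      by (intro Henstock_Kurzweil_Integration.integral_combine set_borel_integral_eq_integral(1)[OF int])
        auto
    then show ?thesis
      unfolding window_avg_def G_def set_borel_integral_eq_integral(2)[OF int] by simp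
  qed
  ultimately show ?thesis
    by (rule continuous_on_eq)
qed

lemma tendsto_window_avg:
  assumes \<theta>: "in_YB B3 \<theta>" "\<And>n. in_YB B3 (\<theta>n n)" and "\<epsilon> > 0"
    and L2: "(\<lambda>n. L2dist 0 1 (\<theta>n n) \<theta>) \<longlonglongrightarrow> 0"
    and z: "zn \<longlonglongrightarrow> z" "\<And>n. zn n \<in> {0..1}" "z \<in> {0..1}"
  shows "(\<lambda>n. window_avg B3 \<epsilon> (\<theta>n n) (zn n)) \<longlonglongrightarrow> window_avg B3 \<epsilon> \<theta> z"
proof -
  let ?A = "window_avg B3 \<epsilon>"
  have "(\<lambda>n. ?A \<theta> (zn n)) \<longlonglongrightarrow> ?A \<theta> z"
    using z by (intro continuous_on_tendsto_compose[OF continuous_on_window_avg[OF \<theta>(1) assms(3)]]) auto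
  then have "(\<lambda>n. \<bar>?A \<theta> (zn n) - ?A \<theta> z\<bar>) \<longlonglongrightarrow> 0"
    by (intro tendsto_rabs_zero LIM_zero)
  from tendsto_add[OF tendsto_divide_zero[OF L2] this]
  have bound_tendsto: "(\<lambda>n. L2dist 0 1 (\<theta>n n) \<theta> / \<epsilon> + \<bar>?A \<theta> (zn n) - ?A \<theta> z\<bar>) \<longlonglongrightarrow> 0"
    by simp
  have "\<bar>?A (\<theta>n n) (zn n) - ?A \<theta> z\<bar> \<le> L2dist 0 1 (\<theta>n n) \<theta> / \<epsilon> + \<bar>?A \<theta> (zn n) - ?A \<theta> z\<bar>" for n
    using abs_window_avg_diff_le[OF \<theta>(2)[of n] \<theta>(1) assms(3), of "zn n"] z(2)[of n] by auto
  then have "(\<lambda>n. ?A (\<theta>n n) (zn n) - ?A \<theta> z) \<longlonglongrightarrow> 0"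
    by (intro Lim_null_comparison[OF _ bound_tendsto] always_eventually) simp
  then show ?thesis
    by (rule LIM_zero_cancel)
qed

lemma in_Y_in_YB: "in_Y T B3 \<Theta>t \<Longrightarrow> t \<in> {0..<T} \<Longrightarrow> in_YB B3 (\<Theta>t t)"
  unfolding in_Y_def by blast

lemma L2dist_nonneg: "0 \<le> L2dist a b f g"
  unfolding L2dist_def set_lebesgue_integral_def by simp

lemma L2dist_le_Ydist:
  assumes "in_Y T B3 f" "in_Y T B3 g" "t \<in> {0..<T}"
  shows "L2dist 0 1 (f t) (g t) \<le> Ydist T f g"
  unfolding Ydist_def
proof (rule cSUP_upper[OF assms(3)])
  show "bdd_above ((\<lambda>t. L2dist 0 1 (f t) (g t)) ` {0..<T})"
    using L2dist_in_YB_bounds(2) in_Y_in_YB assms(1,2) by (intro bdd_aboveI2[where M="2 * B3"]) auto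
qed

lemma L2dist_tendsto_in_Y:
  assumes "in_Y T B3 \<Theta>t" "t \<in> {0..<T}" and "tn \<longlonglongrightarrow> t" "\<And>n. tn n \<in> {0..<T}"
  shows "(\<lambda>n. L2dist 0 1 (\<Theta>t (tn n)) (\<Theta>t t)) \<longlonglongrightarrow> 0"
proof -
  have "continuous (at t within {0..<T}) (\<lambda>t'. L2dist 0 1 (\<Theta>t t') (\<Theta>t t))"
    using assms(1,2) unfolding continuous_within in_Y_def by (simp add: L2dist_def)
  from continuous_within_tendsto_compose'[OF this assms(4,3)] show ?thesis
    by (simp add: L2dist_def)
qed

lemma abs_A_eps_le:
  assumes "in_Y T B3 \<Theta>t" "t \<in> {0..<T}" "\<epsilon> > 0" "0 \<le> z"
  shows "\<bar>A_eps B3 \<epsilon> \<Theta>t t z\<bar> \<le> B3"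
  using abs_window_avg_le[OF in_Y_in_YB[OF assms(1,2)] assms(3)] assms(4)
  by (simp add: A_eps_eq_window_avg)

lemma continuous_on_A_eps:
  assumes "in_Y T B3 \<Theta>t" "\<epsilon> > 0"
  shows "continuous_on ({0..<T} \<times> {0..1}) (\<lambda>p. A_eps B3 \<epsilon> \<Theta>t (fst p) (snd p))"
proof (rule continuous_on_sequentiallyI)
  fix u :: "nat \<Rightarrow> real \<times> real" and a
  assume u: "\<forall>n. u n \<in> {0..<T} \<times> {0..1}" "a \<in> {0..<T} \<times> {0..1}" "u \<longlonglongrightarrow> a"
  have "(\<lambda>n. window_avg B3 \<epsilon> (\<Theta>t (fst (u n))) (snd (u n))) \<longlonglongrightarrow> window_avg B3 \<epsilon> (\<Theta>t (fst a)) (snd a)"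
  proof (rule tendsto_window_avg[OF _ _ assms(2)])
    show "(\<lambda>n. L2dist 0 1 (\<Theta>t (fst (u n))) (\<Theta>t (fst a))) \<longlonglongrightarrow> 0"
      using u by (intro L2dist_tendsto_in_Y[OF assms(1)] tendsto_fst) (auto simp: mem_Times_iff)
  qed (use u assms(1) in \<open>auto intro: in_Y_in_YB tendsto_snd simp: mem_Times_iff\<close>)
  then show "(\<lambda>n. A_eps B3 \<epsilon> \<Theta>t (fst (u n)) (snd (u n))) \<longlonglongrightarrow> A_eps B3 \<epsilon> \<Theta>t (fst a) (snd a)"
    using u by (simp add: A_eps_eq_window_avg mem_Times_iff)
qed

lemma tendsto_A_eps:
  assumes \<Theta>: "in_Y T B3 \<Theta>t" "\<And>n. in_Y T B3 (\<Theta>n n)" and "\<epsilon> > 0"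
    and Ydist: "(\<lambda>n. Ydist T (\<Theta>n n) \<Theta>t) \<longlonglongrightarrow> 0" and "t \<in> {0..<T}"
    and z: "zn \<longlonglongrightarrow> z" "\<And>n. zn n \<in> {0..1}" "z \<in> {0..1}"
  shows "(\<lambda>n. A_eps B3 \<epsilon> (\<Theta>n n) t (zn n)) \<longlonglongrightarrow> A_eps B3 \<epsilon> \<Theta>t t z"
proof -
  have "(\<lambda>n. L2dist 0 1 (\<Theta>n n t) (\<Theta>t t)) \<longlonglongrightarrow> 0"
  proof (rule Lim_null_comparison[OF always_eventually Ydist], intro allI)
    show "norm (L2dist 0 1 (\<Theta>n n t) (\<Theta>t t)) \<le> Ydist T (\<Theta>n n) \<Theta>t" for n
      using L2dist_le_Ydist[OF \<Theta>(2) \<Theta>(1) \<open>t \<in> {0..<T}\<close>] by (simp add: L2dist_nonneg)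
  qed
  from tendsto_window_avg[OF in_Y_in_YB[OF \<Theta>(1)] in_Y_in_YB[OF \<Theta>(2)] \<open>\<epsilon> > 0\<close> this z]
  show ?thesis
    using \<open>t \<in> {0..<T}\<close> z by (simp add: A_eps_eq_window_avg)
qed

section \<open>Measurability along left-continuous paths\<close>

lemma borel_measurable_indicator_left_continuous:
  fixes g :: "real \<Rightarrow> real"
  assumes g: "\<And>t. t \<in> {a<..<b} \<Longrightarrow> continuous (at_left t) g"
  shows "(\<lambda>t. indicator {a<..<b} t * g t) \<in> borel_measurable borel"
proof -
  let ?S = "{a<..<b}"
  \<comment> \<open>sample \<open>g\<close> at the grid point of mesh \<open>1/(n+1)\<close> immediately left of \<open>t\<close>\<close>
  define N where "N n = real (Suc n)" for n
  define grid where "grid n t = (real_of_int \<lceil>N n * t\<rceil> - 1) / N n" for n t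
  define f where "f n k t = indicator ?S t *
      (if (real_of_int k - 1) / N n \<in> ?S then g ((real_of_int k - 1) / N n) else 0)" for n k t
  have N: "N n > 0" for n
    unfolding N_def by simp
  have grid_less: "grid n t < t" for n t
  proof -
    have "real_of_int \<lceil>N n * t\<rceil> - 1 < N n * t" by linarith
    then show ?thesis unfolding grid_def using N[of n] by (simp add: divide_less_eq mult.commute)
  qed
  have grid_ge: "t - 1 / N n \<le> grid n t" for n t
  proof -
    have "N n * t - 1 \<le> real_of_int \<lceil>N n * t\<rceil> - 1" by linarith
    then show ?thesis unfolding grid_def using N[of n] by (simp add: field_simps)
  qed
  have "(\<lambda>t. f n \<lceil>N n * t\<rceil> t) \<in> borel_measurable borel" for n
  proof -
    have ceiling: "(\<lambda>t. \<lceil>N n * t\<rceil>) \<in> measurable borel (count_space UNIV)"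
      by (rule measurable_compose[OF _ measurable_real_ceiling]) measurable
    have "f n k \<in> borel_measurable borel" for k
      unfolding f_def by measurable
    then show ?thesis
      by (rule measurable_compose_countable'[where f="f n" and I=UNIV, OF _ ceiling]) simp_all
  qed
  moreover have "(\<lambda>n. f n \<lceil>N n * t\<rceil> t) \<longlonglongrightarrow> indicator ?S t * g t" for t
  proof (cases "t \<in> ?S")
    case t: True
    then have "a < t" "t < b" by auto
    have "(\<lambda>n. 1 / N n) \<longlonglongrightarrow> 0"
      unfolding N_def using LIMSEQ_inverse_real_of_nat by (simp add: inverse_eq_divide)
    from tendsto_diff[OF tendsto_const this, of t]
    have "(\<lambda>n. t - 1 / N n) \<longlonglongrightarrow> t" by simp
    then have grid_tendsto: "(\<lambda>n. grid n t) \<longlonglongrightarrow> t"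
      by (rule tendsto_sandwich[OF _ _ _ tendsto_const, rotated 2])
        (auto intro!: always_eventually simp: grid_ge less_imp_le[OF grid_less])
    from order_tendstoD(1)[OF grid_tendsto \<open>a < t\<close>]
    have grid_in_S: "eventually (\<lambda>n. grid n t \<in> ?S) sequentially"
      by (rule eventually_mono) (use grid_less[of _ t] \<open>t < b\<close> in \<open>auto intro: less_trans\<close>)
    have grid_left: "filterlim (\<lambda>n. grid n t) (at_left t) sequentially"
      unfolding filterlim_at using grid_tendsto grid_less
      by (auto intro!: always_eventually simp: less_imp_neq)
    have "(g \<longlongrightarrow> g t) (at_left t)"
      using g[OF t] by (simp add: continuous_within)
    from filterlim_compose[OF this grid_left]
    have "(\<lambda>n. g (grid n t)) \<longlonglongrightarrow> g t" .
    moreover have "eventually (\<lambda>n. g (grid n t) = f n \<lceil>N n * t\<rceil> t) sequentially"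
      using grid_in_S by (rule eventually_mono) (use t in \<open>simp add: f_def grid_def\<close>)
    ultimately have "(\<lambda>n. f n \<lceil>N n * t\<rceil> t) \<longlonglongrightarrow> g t"
      by (rule Lim_transform_eventually)
    then show ?thesis
      using t by simp
  qed (simp add: f_def)
  ultimately show ?thesis
    by (rule borel_measurable_LIMSEQ_real[rotated])
qed

lemma borel_measurable_indicator_comp_left_continuous:
  fixes \<Phi> :: "real \<times> real \<Rightarrow> real" and \<gamma> :: "real \<Rightarrow> real"
  assumes \<Phi>: "continuous_on ({a<..<b} \<times> K) \<Phi>" and K: "closed K"
    and \<gamma>: "\<And>t. t \<in> {a<..<b} \<Longrightarrow> \<gamma> t \<in> K" "\<And>t. t \<in> {a<..<b} \<Longrightarrow> continuous (at_left t) \<gamma>"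
  shows "(\<lambda>t. indicator {a<..<b} t * \<Phi> (t, \<gamma> t)) \<in> borel_measurable borel"
proof -
  let ?S = "{a<..<b} \<times> K"
  have [measurable]: "(\<lambda>t. indicator {a<..<b} t * \<gamma> t) \<in> borel_measurable borel"
    by (rule borel_measurable_indicator_left_continuous[OF \<gamma>(2)])
  have "?S \<in> sets borel"
    using pair_measureI[OF borel_open[OF open_greaterThanLessThan[of a b]] borel_closed[OF K]]
    unfolding borel_prod .
  then have [measurable]: "(\<lambda>q. indicator ?S q * \<Phi> q) \<in> borel_measurable borel"
    using borel_measurable_continuous_on_indicator[OF _ \<Phi>] by simp
  have "(\<lambda>t. (\<lambda>q. indicator ?S q * \<Phi> q) (t, indicator {a<..<b} t * \<gamma> t)) \<in> borel_measurable borel"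
    by measurable
  also have "(\<lambda>t. (\<lambda>q. indicator ?S q * \<Phi> q) (t, indicator {a<..<b} t * \<gamma> t)) =
      (\<lambda>t. indicator {a<..<b} t * \<Phi> (t, \<gamma> t))"
    using \<gamma>(1) by (auto simp: indicator_def)
  finally show ?thesis .
qed

lemma in_X_mem: "in_X T B1 \<gamma> \<Longrightarrow> t \<in> {0<..<T} \<Longrightarrow> \<gamma> t \<in> {0..1}"
  unfolding in_X_def by blast

lemma borel_measurable_in_X_comp:
  fixes \<Phi> :: "real \<times> real \<Rightarrow> real"
  assumes "in_X T B1 \<gamma>" "continuous_on ({0<..<T} \<times> {0..1}) \<Phi>"
  shows "(\<lambda>t. indicator {0<..<T} t * \<Phi> (t, \<gamma> t)) \<in> borel_measurable borel"
  by (rule borel_measurable_indicator_comp_left_continuous[where K="{0..1}"])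
    (use assms in \<open>auto simp: in_X_def\<close>)

lemma borel_measurable_in_X:
  assumes "in_X T B1 \<gamma>"
  shows "(\<lambda>t. indicator {0<..<T} t * \<gamma> t) \<in> borel_measurable borel"
  using borel_measurable_in_X_comp[OF assms, of snd] by (simp add: continuous_on_snd)

lemma set_integrable_in_X_diff_power:
  assumes "in_X T B1 \<gamma>" "in_X T B1 \<gamma>'"
  shows "set_integrable lborel {0<..<T} (\<lambda>t. (\<gamma> t - \<gamma>' t) ^ k)"
proof (rule set_integrable_bounded[where B=1])
  let ?S = "{0<..<T}"
  have "(\<lambda>t. indicator ?S t * (indicator ?S t * \<gamma> t - indicator ?S t * \<gamma>' t) ^ k)
      \<in> borel_measurable borel"
    using borel_measurable_in_X[OF assms(1)] borel_measurable_in_X[OF assms(2)] by measurable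
  also have "(\<lambda>t. indicator ?S t * (indicator ?S t * \<gamma> t - indicator ?S t * \<gamma>' t) ^ k) =
      (\<lambda>t. indicator ?S t *\<^sub>R (\<gamma> t - \<gamma>' t) ^ k)"
    by (auto simp: indicator_def)
  finally show "set_borel_measurable lborel ?S (\<lambda>t. (\<gamma> t - \<gamma>' t) ^ k)"
    by (simp add: set_borel_measurable_def)
  show "\<bar>(\<gamma> t - \<gamma>' t) ^ k\<bar> \<le> 1" if "t \<in> {0<..<T}" for t
    using in_X_mem[OF assms(1) that] in_X_mem[OF assms(2) that]
    by (auto simp: power_abs intro!: power_le_one)
qed (use emeasure_bounded_finite[OF bounded_box[of 0 T]] in \<open>auto simp: box_real\<close>)

lemma L2dist_tendsto_imp_AE_subseq:
  fixes f :: "nat \<Rightarrow> real \<Rightarrow> real" and g :: "real \<Rightarrow> real"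
  assumes "a \<le> b"
    and int: "\<And>n. set_integrable lborel {a<..<b} (\<lambda>x. f n x - g x)"
    and int2: "\<And>n. set_integrable lborel {a<..<b} (\<lambda>x. (f n x - g x)\<^sup>2)"
    and lim: "(\<lambda>n. L2dist a b (f n) g) \<longlonglongrightarrow> 0"
  obtains \<sigma> where "strict_mono \<sigma>" "AE x in lborel. x \<in> {a<..<b} \<longrightarrow> (\<lambda>k. f (\<sigma> k) x) \<longlonglongrightarrow> g x"
proof -
  define u where "u n x = indicator {a<..<b} x * (f n x - g x)" for n x
  have u_int: "integrable lborel (u n)" for n
    using int[of n] by (simp add: u_def[abs_def] set_integrable_def)
  have "(LINT x|lborel. norm (u n x)) = (LINT x:{a<..<b}|lborel. \<bar>f n x - g x\<bar>)" for n
    unfolding u_def set_lebesgue_integral_def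
    by (intro Bochner_Integration.integral_cong) (auto simp: indicator_def)
  also have "\<dots> n \<le> sqrt (b - a) * L2dist a b (f n) g" for n
    using set_integral_abs_le_sqrt[OF _ _ int int2, of n] \<open>a \<le> b\<close>
    by (simp add: L2dist_def real_sqrt_mult emeasure_bounded_finite)
  finally have L1_le: "norm (LINT x|lborel. norm (u n x)) \<le> sqrt (b - a) * L2dist a b (f n) g" for n
    by simp
  have "(\<lambda>n. LINT x|lborel. norm (u n x)) \<longlonglongrightarrow> 0"
    using L1_le
    by (intro Lim_null_comparison[OF always_eventually
          tendsto_mult_right_zero[OF lim, where c="sqrt (b - a)"]]) simp
  from tendsto_L1_AE_subseq[OF u_int this]
  obtain \<sigma> where \<sigma>: "strict_mono \<sigma>" "AE x in lborel. (\<lambda>k. u (\<sigma> k) x) \<longlonglongrightarrow> 0"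
    by blast
  have "AE x in lborel. x \<in> {a<..<b} \<longrightarrow> (\<lambda>k. f (\<sigma> k) x) \<longlonglongrightarrow> g x"
    using \<sigma>(2) by eventually_elim (auto simp: u_def LIM_zero_iff)
  with \<sigma>(1) show thesis
    by (rule that)
qed

lemma AE_lborel_fst_snd:
  assumes "AE x in (lborel :: 'a::euclidean_space measure). P x"
  shows "AE p in (lborel :: ('a \<times> 'a) measure). P (fst p) \<and> P (snd p)"
proof -
  obtain N where N: "{x. \<not> P x} \<subseteq> N" "emeasure lborel N = 0" "N \<in> sets lborel"
    using assms by (auto elim!: AE_E)
  then have N_null: "N \<in> null_sets lborel" by auto
  have "N \<times> UNIV \<union> UNIV \<times> N \<in> null_sets (lborel \<Otimes>\<^sub>M (lborel :: 'a measure))"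
    using lborel.times_in_null_sets1[OF N_null, of UNIV] lborel.times_in_null_sets2[OF _ N_null, of UNIV lborel]
    by auto
  then have "N \<times> UNIV \<union> UNIV \<times> N \<in> null_sets (lborel :: ('a \<times> 'a) measure)"
    by (simp add: lborel_prod)
  then show ?thesis
    by (rule AE_I') (use N(1) in auto)
qed

section \<open>Lower semicontinuity\<close>

lemma set_integral_le_liminf_subseq:
  fixes H :: "nat \<Rightarrow> 'a \<Rightarrow> real" and H0 :: "'a \<Rightarrow> real"
  assumes Q: "Q \<in> sets M" "emeasure M Q < \<infinity>"
    and meas: "\<And>n. set_borel_measurable M Q (H n)" "set_borel_measurable M Q H0"
    and bound: "\<And>n x. x \<in> Q \<Longrightarrow> 0 \<le> H n x \<and> H n x \<le> C" "\<And>x. x \<in> Q \<Longrightarrow> 0 \<le> H0 x \<and> H0 x \<le> C"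
    and subseq: "\<And>r :: nat \<Rightarrow> nat. strict_mono r \<Longrightarrow> \<exists>\<sigma>. strict_mono \<sigma> \<and>
        (AE x in M. x \<in> Q \<longrightarrow> ennreal (H0 x) \<le> liminf (\<lambda>k. ennreal (H (r (\<sigma> k)) x)))"
  shows "ereal (LINT x:Q|M. H0 x) \<le> liminf (\<lambda>n. ereal (LINT x:Q|M. H n x))"
proof -
  define K where "K n = (LINT x:Q|M. H n x)" for n
  have int: "set_integrable M Q G" if "set_borel_measurable M Q G" "\<And>x. x \<in> Q \<Longrightarrow> 0 \<le> G x \<and> G x \<le> C"
    for G
    using that by (intro set_integrable_bounded[OF Q, where B=C]) auto
  have ennreal_integral: "ennreal (LINT x:Q|M. G x) = (\<integral>\<^sup>+x. ennreal (indicator Q x * G x) \<partial>M)"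
    if "set_borel_measurable M Q G" "\<And>x. x \<in> Q \<Longrightarrow> 0 \<le> G x \<and> G x \<le> C" for G
    using int[OF that] that(2) unfolding set_lebesgue_integral_def set_integrable_def
    by (subst nn_integral_eq_integral) (auto simp: indicator_def)
  have K_bound: "0 \<le> K n \<and> K n \<le> C * measure M Q" for n
  proof
    show "0 \<le> K n"
      unfolding K_def set_lebesgue_integral_def using bound(1)
      by (intro Bochner_Integration.integral_nonneg) (simp add: indicator_def)
    have "K n \<le> (LINT x:Q|M. C)"
      unfolding K_def
    proof (rule set_integral_mono[OF int[OF meas(1) bound(1)]])
      show "set_integrable M Q (\<lambda>_. C)"
        using bound(1) by (intro set_integrable_bounded[OF Q, where B="\<bar>C\<bar>"])
          (use Q(1) in \<open>auto simp: set_borel_measurable_def\<close>)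
    qed (use bound(1) in auto)
    then show "K n \<le> C * measure M Q"
      using Q by (simp add: set_integral_const mult.commute)
  qed
  define L where "L = liminf (\<lambda>n. ereal (K n))"
  obtain r where r: "strict_mono r" and rL: "((\<lambda>n. ereal (K n)) \<circ> r) \<longlonglongrightarrow> L"
    using liminf_subseq_lim[of "\<lambda>n. ereal (K n)"] unfolding L_def by blast
  have "ereal 0 \<le> L" "L \<le> ereal (C * measure M Q)"
    using K_bound by (auto intro!: LIMSEQ_le_const[OF rL] LIMSEQ_le_const2[OF rL])
  then obtain l where L: "L = ereal l" and "0 \<le> l"
    by (cases L) auto
  obtain \<sigma> where \<sigma>: "strict_mono \<sigma>"
    and ae: "AE x in M. x \<in> Q \<longrightarrow> ennreal (H0 x) \<le> liminf (\<lambda>k. ennreal (H (r (\<sigma> k)) x))"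
    using subseq[OF r] by blast
  have "(\<lambda>k. K (r (\<sigma> k))) \<longlonglongrightarrow> l"
    using LIMSEQ_subseq_LIMSEQ[OF rL \<sigma>] L by (simp add: o_def)
  have "ennreal (LINT x:Q|M. H0 x) = (\<integral>\<^sup>+x. ennreal (indicator Q x * H0 x) \<partial>M)"
    by (rule ennreal_integral[OF meas(2) bound(2)])
  also have "\<dots> \<le> (\<integral>\<^sup>+x. liminf (\<lambda>k. ennreal (indicator Q x * H (r (\<sigma> k)) x)) \<partial>M)"
    using ae by (intro nn_integral_mono_AE) (auto simp: indicator_def)
  also have "\<dots> \<le> liminf (\<lambda>k. \<integral>\<^sup>+x. ennreal (indicator Q x * H (r (\<sigma> k)) x) \<partial>M)"
    using meas(1) by (intro nn_integral_liminf) (simp add: set_borel_measurable_def)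
  also have "\<dots> = liminf (\<lambda>k. ennreal (K (r (\<sigma> k))))"
    unfolding K_def by (simp add: ennreal_integral[OF meas(1) bound(1)])
  also have "\<dots> = ennreal l"
    by (rule lim_imp_Liminf) (auto intro!: tendsto_ennrealI \<open>(\<lambda>k. K (r (\<sigma> k))) \<longlonglongrightarrow> l\<close>)
  finally show ?thesis
    using \<open>0 \<le> l\<close> L unfolding L_def K_def by (simp add: ennreal_le_iff)
qed

lemma ennreal_mult_of_bool_le_liminf:
  fixes u a b :: "nat \<Rightarrow> real"
  assumes u: "u \<longlonglongrightarrow> u0" "\<And>k. 0 \<le> u k" and a: "a \<longlonglongrightarrow> a0" and b: "b \<longlonglongrightarrow> b0"
  shows "ennreal (u0 * of_bool (b0 < a0)) \<le> liminf (\<lambda>k. ennreal (u k * of_bool (b k < a k)))"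
proof (cases "b0 < a0")
  case True
  have "eventually (\<lambda>k. 0 < a k - b k) sequentially"
    using True by (intro order_tendstoD(1)[OF tendsto_diff[OF a b]]) simp
  then have "eventually (\<lambda>k. ennreal (u k) = ennreal (u k * of_bool (b k < a k))) sequentially"
    by (rule eventually_mono) simp
  from Lim_transform_eventually[OF tendsto_ennrealI[OF u(1)] this]
  have "(\<lambda>k. ennreal (u k * of_bool (b k < a k))) \<longlonglongrightarrow> ennreal (u0 * of_bool (b0 < a0))"
    using True by simp
  then show ?thesis
    by (simp add: lim_imp_Liminf)
qed simp

text \<open>The integrand common to \<open>K\<^sub>1\<close> and \<open>K\<^sub>2\<close>; the weight \<open>W\<close> stands for
  \<open>|A\<^sub>\<epsilon>\<theta>(t\<^sub>1) - A\<^sub>\<epsilon>\<theta>(t\<^sub>2)|\<close> resp. \<open>(\<gamma>(t\<^sub>2) - \<gamma>(t\<^sub>1))\<^sup>+\<close>.\<close>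

definition K_integrand ::
    "real \<Rightarrow> real \<Rightarrow> real \<Rightarrow> real \<Rightarrow> (real \<times> real \<times> real \<Rightarrow> real) \<Rightarrow> (real \<Rightarrow> real \<Rightarrow> real) \<Rightarrow>
     real \<Rightarrow> (real \<Rightarrow> real) \<Rightarrow> (real \<times> real \<Rightarrow> real) \<Rightarrow> real \<times> real \<Rightarrow> real" where
  "K_integrand B3 \<epsilon> \<epsilon>1 \<epsilon>2 Th \<Theta>t s \<gamma> W p =
     indicator {p. 0 < snd p - fst p \<and> snd p - fst p < \<epsilon>1} p * W p *
     indicator {p. A_eps B3 \<epsilon> \<Theta>t (fst p) (\<gamma> (fst p)) > Th (s, \<gamma> (fst p), fst p) + \<epsilon>2} p"

lemma K_integrand_bounds:
  "0 \<le> W p \<Longrightarrow> W p \<le> C \<Longrightarrow>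
     0 \<le> K_integrand B3 \<epsilon> \<epsilon>1 \<epsilon>2 Th \<Theta>t s \<gamma> W p \<and> K_integrand B3 \<epsilon> \<epsilon>1 \<epsilon>2 Th \<Theta>t s \<gamma> W p \<le> C"
  unfolding K_integrand_def by (auto simp: indicator_def)

lemma borel_measurable_A_eps_in_X:
  assumes "in_Y T B3 \<Theta>t" "in_X T B1 \<gamma>" "\<epsilon> > 0"
  shows "(\<lambda>t. indicator {0<..<T} t * A_eps B3 \<epsilon> \<Theta>t t (\<gamma> t)) \<in> borel_measurable borel"
proof -
  have "continuous_on ({0<..<T} \<times> {0..1}) (\<lambda>q. A_eps B3 \<epsilon> \<Theta>t (fst q) (snd q))"
    by (rule continuous_on_subset[OF continuous_on_A_eps[OF assms(1,3)]]) auto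
  from borel_measurable_in_X_comp[OF assms(2) this] show ?thesis
    by simp
qed

lemma set_borel_measurable_K_integrand:
  assumes Y: "in_Y T B3 \<Theta>t" and X: "in_X T B1 \<gamma>" and "\<epsilon> > 0" and Th: "continuous_on UNIV Th"
    and W: "set_borel_measurable lborel ({0<..<T} \<times> {0<..<T}) W"
  shows "set_borel_measurable lborel ({0<..<T} \<times> {0<..<T}) (K_integrand B3 \<epsilon> \<epsilon>1 \<epsilon>2 Th \<Theta>t s \<gamma> W)"
proof -
  let ?S = "{0<..<T}"
  define mA where "mA t = indicator ?S t * A_eps B3 \<epsilon> \<Theta>t t (\<gamma> t)" for t
  define mC where "mC t = indicator ?S t * Th (s, \<gamma> t, t)" for t
  have [measurable]: "mA \<in> borel_measurable borel"
    unfolding mA_def by (rule borel_measurable_A_eps_in_X[OF Y X \<open>\<epsilon> > 0\<close>])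
  have "continuous_on (?S \<times> {0..1}) (\<lambda>q. Th (s, snd q, fst q))"
    by (rule continuous_on_compose2[OF Th]) (auto intro!: continuous_intros)
  from borel_measurable_in_X_comp[OF X this]
  have [measurable]: "mC \<in> borel_measurable borel"
    by (simp add: mC_def[abs_def])
  have [measurable]: "(\<lambda>p. indicator (?S \<times> ?S) p * W p) \<in> borel_measurable (lborel \<Otimes>\<^sub>M lborel)"
    using W by (simp add: set_borel_measurable_def lborel_prod)
  have "(\<lambda>p. indicator {p. 0 < snd p - fst p \<and> snd p - fst p < \<epsilon>1} p * (indicator (?S \<times> ?S) p * W p) *
      indicator {p. mA (fst p) > mC (fst p) + \<epsilon>2} p) \<in> borel_measurable (lborel \<Otimes>\<^sub>M lborel)"
    by measurable
  also have "(\<lambda>p. indicator {p. 0 < snd p - fst p \<and> snd p - fst p < \<epsilon>1} p * (indicator (?S \<times> ?S) p * W p) *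
      indicator {p. mA (fst p) > mC (fst p) + \<epsilon>2} p) =
      (\<lambda>p. indicator (?S \<times> ?S) p *\<^sub>R K_integrand B3 \<epsilon> \<epsilon>1 \<epsilon>2 Th \<Theta>t s \<gamma> W p)"
    by (auto simp: K_integrand_def mA_def mC_def indicator_def mem_Times_iff)
  finally show ?thesis
    by (simp add: set_borel_measurable_def lborel_prod)
qed

lemma K_integrand_le_liminf:
  assumes Y: "in_Y T B3 \<Theta>t" "\<And>n. in_Y T B3 (\<Theta>n n)" and Ydist: "(\<lambda>n. Ydist T (\<Theta>n n) \<Theta>t) \<longlonglongrightarrow> 0"
    and s: "sn \<longlonglongrightarrow> s" and X: "in_X T B1 \<gamma>" "\<And>n. in_X T B1 (\<gamma>n n)"
    and "\<epsilon> > 0" and Th: "continuous_on UNIV Th"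
    and t: "t1 \<in> {0<..<T}" and \<gamma>_t1: "(\<lambda>n. \<gamma>n n t1) \<longlonglongrightarrow> \<gamma> t1"
    and W: "(\<lambda>n. Wn n (t1, t2)) \<longlonglongrightarrow> W (t1, t2)" "\<And>n. 0 \<le> Wn n (t1, t2)"
  shows "ennreal (K_integrand B3 \<epsilon> \<epsilon>1 \<epsilon>2 Th \<Theta>t s \<gamma> W (t1, t2)) \<le>
    liminf (\<lambda>n. ennreal (K_integrand B3 \<epsilon> \<epsilon>1 \<epsilon>2 Th (\<Theta>n n) (sn n) (\<gamma>n n) (Wn n) (t1, t2)))"
proof -
  let ?D = "indicator {p. 0 < snd p - fst p \<and> snd p - fst p < \<epsilon>1} (t1, t2) :: real"
  have "(\<lambda>n. A_eps B3 \<epsilon> (\<Theta>n n) t1 (\<gamma>n n t1)) \<longlonglongrightarrow> A_eps B3 \<epsilon> \<Theta>t t1 (\<gamma> t1)"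
    using t in_X_mem[OF X(1) t] in_X_mem[OF X(2) t]
    by (intro tendsto_A_eps[OF Y \<open>\<epsilon> > 0\<close> Ydist _ \<gamma>_t1]) auto
  moreover have "(\<lambda>n. Th (sn n, \<gamma>n n t1, t1) + \<epsilon>2) \<longlonglongrightarrow> Th (s, \<gamma> t1, t1) + \<epsilon>2"
    using Th by (intro tendsto_intros isCont_tendsto_compose[where g=Th] s \<gamma>_t1)
      (simp add: continuous_on_eq_continuous_at)
  moreover have "(\<lambda>n. ?D * Wn n (t1, t2)) \<longlonglongrightarrow> ?D * W (t1, t2)"
    by (intro tendsto_intros W(1))
  ultimately show ?thesis
    using ennreal_mult_of_bool_le_liminf[where u="\<lambda>n. ?D * Wn n (t1, t2)"] W(2)
    by (simp add: K_integrand_def indicator_def)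
qed

lemma lsc_YRX_K_integrand:
  fixes T :: real and W :: "(real \<Rightarrow> real \<Rightarrow> real) \<Rightarrow> (real \<Rightarrow> real) \<Rightarrow> real \<times> real \<Rightarrow> real"
  defines "Q \<equiv> {0<..<T} \<times> {0<..<T}"
  assumes "T > 0" "\<epsilon> > 0" and Th: "continuous_on UNIV Th"
    and W_bounds: "\<And>\<Theta>t \<gamma> p. in_Y T B3 \<Theta>t \<Longrightarrow> in_X T B1 \<gamma> \<Longrightarrow> p \<in> Q \<Longrightarrow>
        0 \<le> W \<Theta>t \<gamma> p \<and> W \<Theta>t \<gamma> p \<le> C"
    and W_meas: "\<And>\<Theta>t \<gamma>. in_Y T B3 \<Theta>t \<Longrightarrow> in_X T B1 \<gamma> \<Longrightarrow> set_borel_measurable lborel Q (W \<Theta>t \<gamma>)"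
    and W_tendsto: "\<And>\<Theta>t \<gamma> \<Theta>n \<gamma>n t1 t2. in_Y T B3 \<Theta>t \<Longrightarrow> in_X T B1 \<gamma> \<Longrightarrow>
        (\<And>n::nat. in_Y T B3 (\<Theta>n n)) \<Longrightarrow> (\<And>n. in_X T B1 (\<gamma>n n)) \<Longrightarrow>
        (\<lambda>n. Ydist T (\<Theta>n n) \<Theta>t) \<longlonglongrightarrow> 0 \<Longrightarrow> (t1, t2) \<in> Q \<Longrightarrow>
        (\<lambda>n. \<gamma>n n t1) \<longlonglongrightarrow> \<gamma> t1 \<Longrightarrow> (\<lambda>n. \<gamma>n n t2) \<longlonglongrightarrow> \<gamma> t2 \<Longrightarrow>
        (\<lambda>n. W (\<Theta>n n) (\<gamma>n n) (t1, t2)) \<longlonglongrightarrow> W \<Theta>t \<gamma> (t1, t2)"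
  shows "lsc_YRX T B1 B3 (\<lambda>\<Theta>t s \<gamma>. LINT p:Q|lborel. K_integrand B3 \<epsilon> \<epsilon>1 \<epsilon>2 Th \<Theta>t s \<gamma> (W \<Theta>t \<gamma>) p)"
  unfolding lsc_YRX_def
proof (intro allI impI, elim conjE)
  fix \<Theta>t s \<gamma> and \<Theta>n :: "nat \<Rightarrow> real \<Rightarrow> real \<Rightarrow> real" and sn :: "nat \<Rightarrow> real" and \<gamma>n
  assume Y: "in_Y T B3 \<Theta>t" and X: "in_X T B1 \<gamma>" and YXn: "\<forall>n. in_Y T B3 (\<Theta>n n) \<and> in_X T B1 (\<gamma>n n)"
    and Ydist: "(\<lambda>n. Ydist T (\<Theta>n n) \<Theta>t) \<longlonglongrightarrow> 0" and s: "sn \<longlonglongrightarrow> s"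
    and L2: "(\<lambda>n. L2dist 0 T (\<gamma>n n) \<gamma>) \<longlonglongrightarrow> 0"
  have Yn: "in_Y T B3 (\<Theta>n n)" and Xn: "in_X T B1 (\<gamma>n n)" for n
    using YXn by auto
  define H where "H n = K_integrand B3 \<epsilon> \<epsilon>1 \<epsilon>2 Th (\<Theta>n n) (sn n) (\<gamma>n n) (W (\<Theta>n n) (\<gamma>n n))" for n
  define H0 where "H0 = K_integrand B3 \<epsilon> \<epsilon>1 \<epsilon>2 Th \<Theta>t s \<gamma> (W \<Theta>t \<gamma>)"
  show "ereal (LINT p:Q|lborel. H0 p) \<le> liminf (\<lambda>n. ereal (LINT p:Q|lborel. H n p))"
  proof (rule set_integral_le_liminf_subseq)
    show "Q \<in> sets lborel"
      unfolding Q_def by (simp add: open_Times borel_open)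
    show "emeasure lborel Q < \<infinity>"
      unfolding Q_def by (intro emeasure_bounded_finite bounded_Times) auto
    show "set_borel_measurable lborel Q (H n)" for n
      unfolding Q_def H_def
      by (rule set_borel_measurable_K_integrand[OF Yn Xn \<open>\<epsilon> > 0\<close> Th W_meas[OF Yn Xn, unfolded Q_def]])
    show "set_borel_measurable lborel Q H0"
      unfolding Q_def H0_def
      by (rule set_borel_measurable_K_integrand[OF Y X \<open>\<epsilon> > 0\<close> Th W_meas[OF Y X, unfolded Q_def]])
    show "0 \<le> H n p \<and> H n p \<le> C" if "p \<in> Q" for n p
      using W_bounds[OF Yn[of n] Xn[of n] that] unfolding H_def by (auto intro!: K_integrand_bounds)
    show "0 \<le> H0 p \<and> H0 p \<le> C" if "p \<in> Q" for p
      using W_bounds[OF Y X that] unfolding H0_def by (auto intro!: K_integrand_bounds)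
  next
    fix r :: "nat \<Rightarrow> nat"
    assume "strict_mono r"
    obtain \<sigma> where "strict_mono \<sigma>"
      and \<sigma>: "AE t in lborel. t \<in> {0<..<T} \<longrightarrow> (\<lambda>k. \<gamma>n (r (\<sigma> k)) t) \<longlonglongrightarrow> \<gamma> t"
    proof (rule L2dist_tendsto_imp_AE_subseq[where f="\<lambda>n. \<gamma>n (r n)"])
      show "(\<lambda>n. L2dist 0 T (\<gamma>n (r n)) \<gamma>) \<longlonglongrightarrow> 0"
        using LIMSEQ_subseq_LIMSEQ[OF L2 \<open>strict_mono r\<close>] by (simp add: o_def)
    qed (use \<open>T > 0\<close> set_integrable_in_X_diff_power[OF Xn X, of _ 1] set_integrable_in_X_diff_power[OF Xn X, of _ 2]
      in auto)
    define \<rho> where "\<rho> = r \<circ> \<sigma>"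
    have "strict_mono \<rho>"
      unfolding \<rho>_def using \<open>strict_mono r\<close> \<open>strict_mono \<sigma>\<close> by (rule strict_mono_o)
    have "AE p in lborel. p \<in> Q \<longrightarrow> ennreal (H0 p) \<le> liminf (\<lambda>k. ennreal (H (\<rho> k) p))"
      using AE_lborel_fst_snd[OF \<sigma>]
    proof eventually_elim
      case (elim p)
      show ?case
      proof
        assume "p \<in> Q"
        then obtain t1 t2 where p: "p = (t1, t2)" "t1 \<in> {0<..<T}" "t2 \<in> {0<..<T}"
          unfolding Q_def by auto
        have Ydist_\<rho>: "(\<lambda>k. Ydist T (\<Theta>n (\<rho> k)) \<Theta>t) \<longlonglongrightarrow> 0" and s_\<rho>: "(\<lambda>k. sn (\<rho> k)) \<longlonglongrightarrow> s"
          using LIMSEQ_subseq_LIMSEQ[OF Ydist \<open>strict_mono \<rho>\<close>] LIMSEQ_subseq_LIMSEQ[OF s \<open>strict_mono \<rho>\<close>]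
          by (simp_all add: o_def)
        have \<gamma>_t1: "(\<lambda>k. \<gamma>n (\<rho> k) t1) \<longlonglongrightarrow> \<gamma> t1" and \<gamma>_t2: "(\<lambda>k. \<gamma>n (\<rho> k) t2) \<longlonglongrightarrow> \<gamma> t2"
          using elim p by (auto simp: \<rho>_def)
        show "ennreal (H0 p) \<le> liminf (\<lambda>k. ennreal (H (\<rho> k) p))"
          unfolding p(1) H_def H0_def
        proof (rule K_integrand_le_liminf[OF Y Yn Ydist_\<rho> s_\<rho> X Xn \<open>\<epsilon> > 0\<close> Th p(2) \<gamma>_t1])
          show "(\<lambda>k. W (\<Theta>n (\<rho> k)) (\<gamma>n (\<rho> k)) (t1, t2)) \<longlonglongrightarrow> W \<Theta>t \<gamma> (t1, t2)"
            using \<open>p \<in> Q\<close> p(1) by (intro W_tendsto[OF Y X Yn Xn Ydist_\<rho> _ \<gamma>_t1 \<gamma>_t2]) simp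
          show "0 \<le> W (\<Theta>n (\<rho> k)) (\<gamma>n (\<rho> k)) (t1, t2)" for k
            using W_bounds[OF Yn Xn] \<open>p \<in> Q\<close> p(1) by blast
        qed
      qed
    qed
    then show "\<exists>\<sigma>. strict_mono \<sigma> \<and> (AE p in lborel. p \<in> Q \<longrightarrow> ennreal (H0 p) \<le> liminf (\<lambda>k. ennreal (H (r (\<sigma> k)) p)))"
      using \<open>strict_mono \<sigma>\<close> unfolding \<rho>_def by auto
  qed
qed

lemma lsc_K1:
  assumes "T > 0" "\<epsilon> > 0" "continuous_on UNIV Th"
  shows "lsc_YRX T B1 B3 (K1 T B3 \<epsilon> \<epsilon>1 \<epsilon>2 Th)"
proof -
  define W where "W \<Theta>t \<gamma> p = \<bar>A_eps B3 \<epsilon> \<Theta>t (fst p) (\<gamma> (fst p)) - A_eps B3 \<epsilon> \<Theta>t (snd p) (\<gamma> (snd p))\<bar>"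
    for \<Theta>t :: "real \<Rightarrow> real \<Rightarrow> real" and \<gamma> :: "real \<Rightarrow> real" and p :: "real \<times> real"
  have K1_eq: "K1 T B3 \<epsilon> \<epsilon>1 \<epsilon>2 Th =
      (\<lambda>\<Theta>t s \<gamma>. LINT p:{0<..<T} \<times> {0<..<T}|lborel. K_integrand B3 \<epsilon> \<epsilon>1 \<epsilon>2 Th \<Theta>t s \<gamma> (W \<Theta>t \<gamma>) p)"
    by (simp add: K1_def K_integrand_def W_def fun_eq_iff)
  show ?thesis
    unfolding K1_eq
  proof (rule lsc_YRX_K_integrand[OF assms, where C="2 * B3"])
    fix \<Theta>t \<gamma> p assume Y: "in_Y T B3 \<Theta>t" and X: "in_X T B1 \<gamma>" and p: "p \<in> {0<..<T} \<times> {0<..<T}"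
    have A_le: "\<bar>A_eps B3 \<epsilon> \<Theta>t t (\<gamma> t)\<bar> \<le> B3" if "t \<in> {0<..<T}" for t
      using that in_X_mem[OF X that] by (intro abs_A_eps_le[OF Y _ \<open>\<epsilon> > 0\<close>]) auto
    show "0 \<le> W \<Theta>t \<gamma> p \<and> W \<Theta>t \<gamma> p \<le> 2 * B3"
      using A_le[of "fst p"] A_le[of "snd p"] p
        abs_triangle_ineq4[of "A_eps B3 \<epsilon> \<Theta>t (fst p) (\<gamma> (fst p))" "A_eps B3 \<epsilon> \<Theta>t (snd p) (\<gamma> (snd p))"]
      unfolding W_def by (auto simp: mem_Times_iff)
  next
    fix \<Theta>t \<gamma> assume Y: "in_Y T B3 \<Theta>t" and X: "in_X T B1 \<gamma>"
    define mA where "mA t = indicator {0<..<T} t * A_eps B3 \<epsilon> \<Theta>t t (\<gamma> t)" for t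
    have [measurable]: "mA \<in> borel_measurable borel"
      unfolding mA_def by (rule borel_measurable_A_eps_in_X[OF Y X \<open>\<epsilon> > 0\<close>])
    have "(\<lambda>p. indicator ({0<..<T} \<times> {0<..<T}) p * \<bar>mA (fst p) - mA (snd p)\<bar>)
        \<in> borel_measurable (lborel \<Otimes>\<^sub>M lborel)"
      by measurable
    then show "set_borel_measurable lborel ({0<..<T} \<times> {0<..<T}) (W \<Theta>t \<gamma>)"
      unfolding set_borel_measurable_def lborel_prod
      by (rule measurable_cong[THEN iffD1, rotated]) (auto simp: W_def mA_def indicator_def)
  next
    fix \<Theta>t \<gamma> \<Theta>n \<gamma>n t1 t2
    assume Y: "in_Y T B3 \<Theta>t" and X: "in_X T B1 \<gamma>" and Yn: "\<And>n::nat. in_Y T B3 (\<Theta>n n)"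
      and Xn: "\<And>n. in_X T B1 (\<gamma>n n)" and Ydist: "(\<lambda>n. Ydist T (\<Theta>n n) \<Theta>t) \<longlonglongrightarrow> 0"
      and t: "(t1, t2) \<in> {0<..<T} \<times> {0<..<T}"
      and \<gamma>_t: "(\<lambda>n. \<gamma>n n t1) \<longlonglongrightarrow> \<gamma> t1" "(\<lambda>n. \<gamma>n n t2) \<longlonglongrightarrow> \<gamma> t2"
    have "(\<lambda>n. A_eps B3 \<epsilon> (\<Theta>n n) t (\<gamma>n n t)) \<longlonglongrightarrow> A_eps B3 \<epsilon> \<Theta>t t (\<gamma> t)"
      if "t \<in> {0<..<T}" "(\<lambda>n. \<gamma>n n t) \<longlonglongrightarrow> \<gamma> t" for t
      using that in_X_mem[OF X that(1)] in_X_mem[OF Xn that(1)]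
      by (intro tendsto_A_eps[OF Y Yn \<open>\<epsilon> > 0\<close> Ydist]) auto
    then show "(\<lambda>n. W (\<Theta>n n) (\<gamma>n n) (t1, t2)) \<longlonglongrightarrow> W \<Theta>t \<gamma> (t1, t2)"
      using t \<gamma>_t unfolding W_def by (auto intro!: tendsto_intros)
  qed
qed

lemma lsc_K2:
  assumes "T > 0" "\<epsilon> > 0" "continuous_on UNIV Th"
  shows "lsc_YRX T B1 B3 (K2 T B3 \<epsilon> \<epsilon>1 \<epsilon>2 Th)"
proof -
  define W where "W \<Theta>t \<gamma> p = max (\<gamma> (snd p) - \<gamma> (fst p)) 0"
    for \<Theta>t :: "real \<Rightarrow> real \<Rightarrow> real" and \<gamma> :: "real \<Rightarrow> real" and p :: "real \<times> real"
  have K2_eq: "K2 T B3 \<epsilon> \<epsilon>1 \<epsilon>2 Th =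
      (\<lambda>\<Theta>t s \<gamma>. LINT p:{0<..<T} \<times> {0<..<T}|lborel. K_integrand B3 \<epsilon> \<epsilon>1 \<epsilon>2 Th \<Theta>t s \<gamma> (W \<Theta>t \<gamma>) p)"
    by (simp add: K2_def K_integrand_def W_def fun_eq_iff)
  show ?thesis
    unfolding K2_eq
  proof (rule lsc_YRX_K_integrand[OF assms, where C=1])
    fix \<Theta>t \<gamma> p assume "in_X T B1 \<gamma>" "p \<in> {0<..<T} \<times> {0<..<T}"
    then show "0 \<le> W \<Theta>t \<gamma> p \<and> W \<Theta>t \<gamma> p \<le> 1"
      using in_X_mem[of T B1 \<gamma> "fst p"] in_X_mem[of T B1 \<gamma> "snd p"] unfolding W_def by auto
  next
    fix \<Theta>t \<gamma> assume X: "in_X T B1 \<gamma>"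
    define m\<gamma> where "m\<gamma> t = indicator {0<..<T} t * \<gamma> t" for t
    have [measurable]: "m\<gamma> \<in> borel_measurable borel"
      unfolding m\<gamma>_def by (rule borel_measurable_in_X[OF X])
    have "(\<lambda>p. indicator ({0<..<T} \<times> {0<..<T}) p * max (m\<gamma> (snd p) - m\<gamma> (fst p)) 0)
        \<in> borel_measurable (lborel \<Otimes>\<^sub>M lborel)"
      by measurable
    then show "set_borel_measurable lborel ({0<..<T} \<times> {0<..<T}) (W \<Theta>t \<gamma>)"
      unfolding set_borel_measurable_def lborel_prod
      by (rule measurable_cong[THEN iffD1, rotated]) (auto simp: W_def m\<gamma>_def indicator_def)
  next
    fix \<Theta>t \<gamma> \<Theta>n and \<gamma>n :: "nat \<Rightarrow> real \<Rightarrow> real" and t1 t2 :: real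
    assume "(\<lambda>n. \<gamma>n n t1) \<longlonglongrightarrow> \<gamma> t1" "(\<lambda>n. \<gamma>n n t2) \<longlonglongrightarrow> \<gamma> t2"
    then show "(\<lambda>n::nat. W (\<Theta>n n) (\<gamma>n n) (t1, t2)) \<longlonglongrightarrow> W \<Theta>t \<gamma> (t1, t2)"
      unfolding W_def by (auto intro!: tendsto_intros)
  qed
qed

theorem lemma6p10:
  fixes T B1 B3 \<epsilon> \<epsilon>1 \<epsilon>2 :: real
    and Qsat Th :: "real \<times> real \<times> real \<Rightarrow> real"
  assumes "T > 0" "B1 > 0" "B3 > 0" "\<epsilon> > 0" "\<epsilon>1 > 0" "\<epsilon>2 > 0"
    and "smooth Qsat"
    and "\<And>\<theta> z t. deriv (\<lambda>x. Qsat (x, z, t)) \<theta> > 0"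
    and "\<And>\<theta> z t. deriv (\<lambda>x. Qsat (\<theta>, x, t)) z < 0"
    and "\<And>w z t. Th (w, z, t) + Qsat (Th (w, z, t), z, t) = w"
    and "smooth Th"
  shows "lsc_YRX T B1 B3 (K1 T B3 \<epsilon> \<epsilon>1 \<epsilon>2 Th) \<and>
         lsc_YRX T B1 B3 (K2 T B3 \<epsilon> \<epsilon>1 \<epsilon>2 Th)"
proof -
  have "Ck 0 Th"
    using \<open>smooth Th\<close> unfolding smooth_def by blast
  then have "continuous_on UNIV Th"
    by simp
  with \<open>T > 0\<close> \<open>\<epsilon> > 0\<close> show ?thesis
    by (intro conjI lsc_K1 lsc_K2)
qed

end
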